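(* Let $\mathcal{A}=(Q,\gamma,W)$ be a one-dimensional pVASS and let $R\neq\emptyset$ be a type II region of $\mathcal{A}$. Then every configuration of $\mathit{pre}^*(R)$ can reach a configuration of $R$ in at most $4|Q|^3$ transitions.
   Context: A one-dimensional pVASS is $\mathcal{A}=(Q,\gamma,W)$ with $Q$ a finite set of control states, rules $\gamma\subseteq Q\times\{-1,0,1\}\times Q$ and weights $W:\gamma\to\mathbb{N}^+$. Configurations are $p(k)\in Q\times\mathbb{N}$. A rule $(p,\kappa,q)$ is enabled in $p(k)$ unless $\kappa=-1$ and $k=0$; a transition $p(k)\to q(k+\kappa)$ exists for each enabled rule, and a configuration with no enabled rule has only a self-loop. $\mathit{post}^*(X)$/$\mathit{pre}^*(X)$ are the sets of configurations reachable from / able to reach $X$. $\mathscr{C}_\mathcal{A}$ is the finite Markov chain on $Q$ with a transition $p\to q$ for each rule $(p,\kappa,q)$ (probability proportional to weight); BSCC = bottom strongly connected component. For $p$ in a BSCC of $\mathscr{C}_\mathcal{A}$, the type II region determined by $p$ is $\mathit{post}^*(p(0))$ if this set is infinite and contained in $\mathit{pre}^*(p(0))$, and $\emptyset$ otherwise. *)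

theory Defs
  imports Main
begin

(* A one-dimensional pVASS (Q, gamma, W): rules are triples (p, kappa, q) with kappa in {-1,0,1}.
   Configurations p(k) are pairs (p, k) :: 'q * nat. *)

definition pvass :: "'q set \<Rightarrow> ('q \<times> int \<times> 'q) set \<Rightarrow> ('q \<times> int \<times> 'q \<Rightarrow> nat) \<Rightarrow> bool" where
  "pvass Q \<gamma> W \<longleftrightarrow> finite Q \<and> \<gamma> \<subseteq> Q \<times> {-1, 0, 1} \<times> Q \<and> (\<forall>r\<in>\<gamma>. W r > 0)"

definition enabled :: "('q \<times> int \<times> 'q) \<Rightarrow> 'q \<times> nat \<Rightarrow> bool" where
  "enabled r c \<longleftrightarrow> (case r of (p, \<kappa>, q) \<Rightarrow> fst c = p \<and> \<not> (\<kappa> = -1 \<and> snd c = 0))"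

definition trans_rel :: "('q \<times> int \<times> 'q) set \<Rightarrow> (('q \<times> nat) \<times> ('q \<times> nat)) set" where
  "trans_rel \<gamma> =
     {((p, k), (q, nat (int k + \<kappa>))) | p k \<kappa> q. (p, \<kappa>, q) \<in> \<gamma> \<and> enabled (p, \<kappa>, q) (p, k)}
   \<union> {(c, c) | c. \<not> (\<exists>r\<in>\<gamma>. enabled r c)}"

definition post_star :: "'q set \<Rightarrow> ('q \<times> int \<times> 'q) set \<Rightarrow> ('q \<times> nat) set \<Rightarrow> ('q \<times> nat) set" where
  "post_star Q \<gamma> X = {c'. c' \<in> Q \<times> UNIV \<and> (\<exists>c\<in>X. (c, c') \<in> (trans_rel \<gamma>)\<^sup>*)}"

definition pre_star :: "'q set \<Rightarrow> ('q \<times> int \<times> 'q) set \<Rightarrow> ('q \<times> nat) set \<Rightarrow> ('q \<times> nat) set" where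
  "pre_star Q \<gamma> X = {c. c \<in> Q \<times> UNIV \<and> (\<exists>c'\<in>X. (c, c') \<in> (trans_rel \<gamma>)\<^sup>*)}"

(* edges of the finite Markov chain C_A (weights are positive, so the edge relation
   is exactly the set of pairs (p,q) joined by some rule) *)
definition chain_edges :: "('q \<times> int \<times> 'q) set \<Rightarrow> ('q \<times> 'q) set" where
  "chain_edges \<gamma> = {(p, q). \<exists>\<kappa>. (p, \<kappa>, q) \<in> \<gamma>}"

definition is_bscc :: "'q set \<Rightarrow> ('q \<times> int \<times> 'q) set \<Rightarrow> 'q set \<Rightarrow> bool" where
  "is_bscc Q \<gamma> C \<longleftrightarrow> C \<noteq> {} \<and> C \<subseteq> Q \<and>
     (\<forall>p\<in>C. \<forall>q\<in>C. (p, q) \<in> (chain_edges \<gamma>)\<^sup>*) \<and>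
     (\<forall>p\<in>C. \<forall>q. (p, q) \<in> chain_edges \<gamma> \<longrightarrow> q \<in> C)"

definition type2_region :: "'q set \<Rightarrow> ('q \<times> int \<times> 'q) set \<Rightarrow> 'q \<Rightarrow> ('q \<times> nat) set" where
  "type2_region Q \<gamma> p =
     (if infinite (post_star Q \<gamma> {(p, 0)}) \<and> post_star Q \<gamma> {(p, 0)} \<subseteq> pre_star Q \<gamma> {(p, 0)}
      then post_star Q \<gamma> {(p, 0)} else {})"

end

theory Submission
  imports Defs
begin

(* A region of type II contains p(k g) for every k, where 0 < g <= |Q|: on the way from p(0) to a
   configuration of height at least |Q| some state repeats with a rise of at most |Q|, and this
   cycle can be pumped, while the way back to p(0), lifted, returns to control state p.
   Hence every configuration of pre*(R) has a shortest walk to some p(m) with g dividing m, and it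
   suffices to bound its length L. No g disjoint cycles can be cut out of such a walk without the
   counter becoming negative: by the pigeonhole principle on prefix sums modulo g, some consecutive
   block of them has an effect divisible by g, and cutting it out yields a shorter walk to a
   multiple of g. Above height |Q|^2 every |Q| + 1 consecutive steps contain a cycle of effect at
   most |Q|, so the final stretch above |Q|^2 is shorter than g (|Q| + 1). Before the last
   configuration below |Q|^2 the counter stays below |Q|^2 + g |Q|, since a larger descent would
   contain g falling cycles; as the walk visits no configuration twice, this part has at most
   2 |Q|^3 steps. *)

lemma relpow_mono: "(R :: ('a \<times> 'a) set) \<subseteq> S \<Longrightarrow> R ^^ n \<subseteq> S ^^ n"
  by (induction n) (simp_all add: relcomp_mono)

lemma relpow_walk_segment:
  assumes "\<forall>t. i \<le> t \<longrightarrow> t < j \<longrightarrow> (f t, f (Suc t)) \<in> R" and "i \<le> j"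
  shows "(f i, f j) \<in> R ^^ (j - i)"
  unfolding relpow_fun_conv
  by (rule exI[of _ "\<lambda>k. f (i + k)"]) (use assms in auto)

lemma relpow_shortest:
  assumes "(x, y) \<in> R\<^sup>*" and "P y"
  shows "\<exists>n y'. P y' \<and> (x, y') \<in> R ^^ n \<and> (\<forall>n' y''. P y'' \<longrightarrow> (x, y'') \<in> R ^^ n' \<longrightarrow> n \<le> n')"
proof -
  obtain n where "(x, y) \<in> R ^^ n" using assms(1) rtrancl_power by blast
  with assms(2) have "\<exists>y'. P y' \<and> (x, y') \<in> R ^^ n" by blast
  from ex_has_least_nat[of "\<lambda>n. \<exists>y'. P y' \<and> (x, y') \<in> R ^^ n", OF this, where m = "\<lambda>n. n"]
  show ?thesis by blast
qed

lemma pigeonhole_interval: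
  assumes "a \<le> b" and "h ` {a..b} \<subseteq> S" and "finite S" and "card S \<le> b - a"
  shows "\<exists>i j. a \<le> i \<and> i < j \<and> j \<le> b \<and> h i = h j"
proof -
  have "card (h ` {a..b}) < card {a..b}" using card_mono[OF assms(3,2)] assms(1,4) by simp
  then have "\<not> inj_on h {a..b}" using card_image by fastforce
  then obtain i j where "i \<in> {a..b}" "j \<in> {a..b}" "i \<noteq> j" "h i = h j" unfolding inj_on_def by blast
  then show ?thesis by (metis atLeastAtMost_iff linorder_neqE_nat)
qed

lemma exists_block_sum_dvd:
  fixes xs :: "int list"
  assumes "length xs = g" and "0 < g"
  shows "\<exists>a b. a < b \<and> b \<le> g \<and> int g dvd sum_list (drop a (take b xs))"
proof -
  define h where "h k = sum_list (take k xs) mod int g" for k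
  have "h ` {0..g} \<subseteq> {0..<int g}" unfolding h_def using assms(2) by auto
  then obtain a b where ab: "a < b" "b \<le> g" "h a = h b"
    using pigeonhole_interval[of 0 g h "{0..<int g}"] by auto
  have "take b xs = take a xs @ drop a (take b xs)"
    using ab(1) by (metis append_take_drop_id less_imp_le_nat min.absorb1 take_take)
  then have "sum_list (take b xs) = sum_list (take a xs) + sum_list (drop a (take b xs))"
    by (metis sum_list_append)
  with ab(3) have "int g dvd sum_list (drop a (take b xs))"
    unfolding h_def by (metis add_diff_cancel_left' mod_eq_dvd_iff)
  with ab(1,2) show ?thesis by blast
qed

(* Enabledness is implicit: the counter after a step must be a natural number. *)
definition counter_step :: "('q \<times> int \<times> 'q) set \<Rightarrow> (('q \<times> nat) \<times> ('q \<times> nat)) set" where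
  "counter_step \<gamma> = {((q, h), (q', h')). \<exists>\<kappa>. (q, \<kappa>, q') \<in> \<gamma> \<and> int h' = int h + \<kappa>}"

definition step_above :: "('q \<times> int \<times> 'q) set \<Rightarrow> int \<Rightarrow> (('q \<times> nat) \<times> ('q \<times> nat)) set" where
  "step_above \<gamma> B = {(x, y) \<in> counter_step \<gamma>. B \<le> int (snd x) \<and> B \<le> int (snd y)}"

definition shift :: "int \<Rightarrow> 'q \<times> nat \<Rightarrow> 'q \<times> nat" where
  "shift d x = (fst x, nat (int (snd x) + d))"

lemma counter_step_subset_trans_rel: "counter_step \<gamma> \<subseteq> trans_rel \<gamma>"
proof
  fix z assume "z \<in> counter_step \<gamma>"
  then obtain q h q' h' \<kappa> where z: "z = ((q, h), (q', h'))" and r: "(q, \<kappa>, q') \<in> \<gamma>"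
    and h': "int h' = int h + \<kappa>"
    unfolding counter_step_def by auto
  have "enabled (q, \<kappa>, q') (q, h)" "h' = nat (int h + \<kappa>)"
    using h' unfolding enabled_def by auto
  then show "z \<in> trans_rel \<gamma>" unfolding trans_rel_def using z r by blast
qed

lemma trans_rel_subset_counter_step:
  assumes "pvass Q \<gamma> W"
  shows "trans_rel \<gamma> \<subseteq> counter_step \<gamma> \<union> Id"
proof
  fix z assume z: "z \<in> trans_rel \<gamma>"
  show "z \<in> counter_step \<gamma> \<union> Id"
  proof (cases "z \<in> Id")
    case False
    then obtain q h \<kappa> q' where z_eq: "z = ((q, h), (q', nat (int h + \<kappa>)))" and r: "(q, \<kappa>, q') \<in> \<gamma>"
      and "enabled (q, \<kappa>, q') (q, h)"
      using z unfolding trans_rel_def by blast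
    moreover have "\<kappa> \<in> {-1, 0, 1}" using r assms unfolding pvass_def by auto
    ultimately have "int (nat (int h + \<kappa>)) = int h + \<kappa>" unfolding enabled_def by auto
    then show ?thesis unfolding counter_step_def using z_eq r by auto
  qed simp
qed

lemma rtrancl_trans_rel_eq:
  assumes "pvass Q \<gamma> W"
  shows "(trans_rel \<gamma>)\<^sup>* = (counter_step \<gamma>)\<^sup>*"
proof -
  have "trans_rel \<gamma> \<subseteq> (counter_step \<gamma>)\<^sup>*"
    using trans_rel_subset_counter_step[OF assms] by auto
  then show ?thesis using rtrancl_subset[OF counter_step_subset_trans_rel] by metis
qed

lemma relpow_counter_step_imp_trans_rel: "(x, y) \<in> counter_step \<gamma> ^^ n \<Longrightarrow> (x, y) \<in> trans_rel \<gamma> ^^ n"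
  using relpow_mono[OF counter_step_subset_trans_rel] by blast

lemma counter_step_unit:
  assumes "pvass Q \<gamma> W" and "(x, y) \<in> counter_step \<gamma>"
  shows "\<bar>int (snd y) - int (snd x)\<bar> \<le> 1" and "fst x \<in> Q" and "fst y \<in> Q"
proof -
  obtain \<kappa> where r: "(fst x, \<kappa>, fst y) \<in> \<gamma>" and "int (snd y) = int (snd x) + \<kappa>"
    using assms(2) unfolding counter_step_def by auto
  moreover have "\<kappa> \<in> {-1, 0, 1}" "fst x \<in> Q" "fst y \<in> Q"
    using r assms(1) unfolding pvass_def by auto
  ultimately show "\<bar>int (snd y) - int (snd x)\<bar> \<le> 1" "fst x \<in> Q" "fst y \<in> Q" by auto
qed

lemma walk_in_Q:
  assumes "pvass Q \<gamma> W" and "\<forall>t<L. (f t, f (Suc t)) \<in> counter_step \<gamma>" and "fst (f 0) \<in> Q"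
    and "t \<le> L"
  shows "fst (f t) \<in> Q"
proof (cases t)
  case (Suc s)
  with assms(2,4) have "(f s, f t) \<in> counter_step \<gamma>" by simp
  then show ?thesis by (rule counter_step_unit(3)[OF assms(1)])
qed (use assms(3) in simp)

lemma step_above_mono: "B' \<le> B \<Longrightarrow> step_above \<gamma> B \<subseteq> step_above \<gamma> B'"
  unfolding step_above_def by auto

lemma step_above_subset: "step_above \<gamma> B \<subseteq> counter_step \<gamma>"
  unfolding step_above_def by auto

lemma step_above_zero: "step_above \<gamma> 0 = counter_step \<gamma>"
  unfolding step_above_def by auto

lemma shift_shift: "0 \<le> int (snd x) + d \<Longrightarrow> shift e (shift d x) = shift (d + e) x"
  unfolding shift_def by (simp add: add.assoc)

lemma step_above_shift:
  assumes "(x, y) \<in> step_above \<gamma> B" and "0 \<le> B + d"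
  shows "(shift d x, shift d y) \<in> step_above \<gamma> (B + d)"
  using assms unfolding step_above_def counter_step_def shift_def by auto

lemma relpow_step_above_shift:
  assumes "(x, y) \<in> step_above \<gamma> B ^^ n" and "0 \<le> B + d"
  shows "(shift d x, shift d y) \<in> step_above \<gamma> (B + d) ^^ n"
  using assms(1)
proof (induction n arbitrary: y)
  case (Suc n)
  then obtain z where "(x, z) \<in> step_above \<gamma> B ^^ n" "(z, y) \<in> step_above \<gamma> B" by auto
  with Suc.IH step_above_shift[OF _ assms(2)] show ?case by (meson relpow_Suc_I)
qed simp

lemma rtrancl_counter_step_lift:
  "((q, h), (q', h')) \<in> (counter_step \<gamma>)\<^sup>* \<Longrightarrow> ((q, h + d), (q', h' + d)) \<in> (counter_step \<gamma>)\<^sup>*"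
proof -
  assume "((q, h), (q', h')) \<in> (counter_step \<gamma>)\<^sup>*"
  then obtain n where "((q, h), (q', h')) \<in> step_above \<gamma> 0 ^^ n"
    by (auto simp: rtrancl_power step_above_zero)
  from relpow_step_above_shift[OF this, of "int d"]
  have "((q, h + d), (q', h' + d)) \<in> step_above \<gamma> (int d) ^^ n" by (simp add: shift_def flip: of_nat_add)
  then show ?thesis using relpow_mono[OF step_above_subset] by (meson rtrancl_power subsetD)
qed

lemma rtrancl_counter_step_pump:
  assumes "((q, h), (q, h + g)) \<in> (counter_step \<gamma>)\<^sup>*"
  shows "((q, h), (q, h + k * g)) \<in> (counter_step \<gamma>)\<^sup>*"
proof (induction k)
  case (Suc k)
  have "((q, h + k * g), (q, h + Suc k * g)) \<in> (counter_step \<gamma>)\<^sup>*"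
    using rtrancl_counter_step_lift[OF assms, of "k * g"] by (simp add: algebra_simps)
  with Suc.IH show ?case by (rule rtrancl_trans)
qed simp

definition unit_steps_on :: "nat \<Rightarrow> nat \<Rightarrow> (nat \<Rightarrow> int) \<Rightarrow> bool" where
  "unit_steps_on a b lv \<longleftrightarrow> (\<forall>t. a \<le> t \<longrightarrow> t < b \<longrightarrow> \<bar>lv (Suc t) - lv t\<bar> \<le> 1)"

lemma unit_steps_on_mono: "unit_steps_on a b lv \<Longrightarrow> a \<le> a' \<Longrightarrow> b' \<le> b \<Longrightarrow> unit_steps_on a' b' lv"
  unfolding unit_steps_on_def by auto

lemma unit_steps_on_uminus: "unit_steps_on a b lv \<Longrightarrow> unit_steps_on a b (\<lambda>t. - lv t)"
  unfolding unit_steps_on_def by auto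

lemma unit_steps_on_dist:
  assumes "unit_steps_on i j lv" and "i \<le> j"
  shows "\<bar>lv j - lv i\<bar> \<le> int (j - i)"
  using assms(2)
proof (induction j rule: dec_induct)
  case (step t)
  with assms(1) have "\<bar>lv (Suc t) - lv t\<bar> \<le> 1" unfolding unit_steps_on_def by simp
  with step show ?case by (simp add: of_nat_diff)
qed simp

lemma walk_unit_steps:
  assumes "pvass Q \<gamma> W" and "\<forall>t<L. (f t, f (Suc t)) \<in> counter_step \<gamma>"
  shows "unit_steps_on 0 L (\<lambda>t. int (snd (f t)))"
  using assms counter_step_unit(1)[OF assms(1)] unfolding unit_steps_on_def by blast

lemma unit_steps_first_hit:
  assumes steps: "unit_steps_on a b lv" and "a \<le> b" and "lv a \<le> v" and "v \<le> lv b"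
  shows "\<exists>t. a \<le> t \<and> t \<le> b \<and> lv t = v \<and> (\<forall>s. a \<le> s \<longrightarrow> s < t \<longrightarrow> lv s < v)"
proof -
  define t where "t = (LEAST t. a \<le> t \<and> v \<le> lv t)"
  have witness: "a \<le> b \<and> v \<le> lv b" using assms(2,4) by simp
  have t: "a \<le> t" "v \<le> lv t"
    using LeastI[of "\<lambda>t. a \<le> t \<and> v \<le> lv t", OF witness] unfolding t_def by simp_all
  have "t \<le> b" unfolding t_def by (rule Least_le[of "\<lambda>t. a \<le> t \<and> v \<le> lv t", OF witness])
  have before: "\<forall>s. a \<le> s \<longrightarrow> s < t \<longrightarrow> lv s < v"
  proof (intro allI impI)
    fix s assume "a \<le> s" "s < t"
    then show "lv s < v" using not_less_Least[of s] unfolding t_def by force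
  qed
  have "lv t = v"
  proof (cases "t = a")
    case False
    then obtain s where s: "t = Suc s" "a \<le> s" using t(1) by (cases t) auto
    then have "\<bar>lv t - lv s\<bar> \<le> 1" using steps \<open>t \<le> b\<close> unfolding unit_steps_on_def by simp
    moreover have "lv s < v" using before s by simp
    ultimately show ?thesis using t(2) by linarith
  qed (use t assms(3) in simp)
  with t(1) \<open>t \<le> b\<close> before show ?thesis by blast
qed

lemma unit_steps_hit_down:
  assumes "unit_steps_on a b lv" and "a \<le> b" and "lv b \<le> v" and "v \<le> lv a"
  shows "\<exists>t. a \<le> t \<and> t \<le> b \<and> lv t = v"
  using unit_steps_first_hit[OF unit_steps_on_uminus[OF assms(1)] assms(2), of "- v"] assms(3,4)
  by auto

lemma rising_repeated_state:
  assumes steps: "unit_steps_on a b lv" and "a \<le> b" and rise: "lv a + int n \<le> lv b"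
    and states: "\<And>t. a \<le> t \<Longrightarrow> t \<le> b \<Longrightarrow> st t \<in> Q" and "finite Q" and "card Q \<le> n"
  shows "\<exists>i j. a \<le> i \<and> i < j \<and> j \<le> b \<and> st i = st j \<and> 0 < lv j - lv i \<and> lv j - lv i \<le> int n"
proof -
  have hits: "\<forall>k\<in>{0..n}. \<exists>t. a \<le> t \<and> t \<le> b \<and> lv t = lv a + int k \<and>
      (\<forall>s. a \<le> s \<longrightarrow> s < t \<longrightarrow> lv s < lv a + int k)"
  proof
    fix k assume "k \<in> {0..n}"
    then have "lv a \<le> lv a + int k" "lv a + int k \<le> lv b" using rise by auto
    then show "\<exists>t. a \<le> t \<and> t \<le> b \<and> lv t = lv a + int k \<and> (\<forall>s. a \<le> s \<longrightarrow> s < t \<longrightarrow> lv s < lv a + int k)"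
      by (rule unit_steps_first_hit[OF steps \<open>a \<le> b\<close>])
  qed
  obtain T where "\<forall>k\<in>{0..n}. a \<le> T k \<and> T k \<le> b \<and> lv (T k) = lv a + int k \<and>
      (\<forall>s. a \<le> s \<longrightarrow> s < T k \<longrightarrow> lv s < lv a + int k)"
    using bchoice[OF hits] by blast
  then have T: "a \<le> T k \<and> T k \<le> b \<and> lv (T k) = lv a + int k \<and>
      (\<forall>s. a \<le> s \<longrightarrow> s < T k \<longrightarrow> lv s < lv a + int k)" if "k \<le> n" for k
    using that by simp
  have "(\<lambda>k. st (T k)) ` {0..n} \<subseteq> Q"
  proof
    fix x assume "x \<in> (\<lambda>k. st (T k)) ` {0..n}"
    then obtain k where "k \<le> n" "x = st (T k)" by auto
    then show "x \<in> Q" using T[of k] states by simp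
  qed
  then obtain k k' where k: "k < k'" "k' \<le> n" "st (T k) = st (T k')"
    using pigeonhole_interval[of 0 n "\<lambda>k. st (T k)" Q] assms(5,6) by auto
  have Tk: "a \<le> T k" "lv (T k) = lv a + int k" "\<forall>s. a \<le> s \<longrightarrow> s < T k \<longrightarrow> lv s < lv a + int k"
    using T[of k] k by auto
  have Tk': "T k' \<le> b" "lv (T k') = lv a + int k'" using T[of k'] k by auto
  have "T k < T k'"
  proof (rule ccontr)
    assume "\<not> T k < T k'"
    moreover have "T k \<noteq> T k'" using Tk(2) Tk'(2) k(1) by auto
    ultimately have "T k' < T k" by simp
    then have "lv (T k') < lv a + int k" using Tk(3) T[of k'] k by auto
    then show False using Tk'(2) k(1) by simp
  qed
  then show ?thesis using Tk Tk' k by (intro exI[of _ "T k"] exI[of _ "T k'"]) auto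
qed

lemma falling_repeated_state:
  assumes "unit_steps_on a b lv" and "a \<le> b" and "lv b + int n \<le> lv a"
    and "\<And>t. a \<le> t \<Longrightarrow> t \<le> b \<Longrightarrow> st t \<in> Q" and "finite Q" and "card Q \<le> n"
  shows "\<exists>i j. a \<le> i \<and> i < j \<and> j \<le> b \<and> st i = st j \<and> lv j < lv i"
  using rising_repeated_state[OF unit_steps_on_uminus[OF assms(1)] assms(2) _ assms(4-6)] assms(3)
  by fastforce

definition disjoint_ordered :: "(nat \<times> nat) list \<Rightarrow> bool" where
  "disjoint_ordered cs \<longleftrightarrow> sorted_wrt (\<lambda>c c'. snd c \<le> fst c') cs"

lemma falling_cycles:
  assumes "unit_steps_on a b lv" and "a \<le> b" and "lv b + int (k * n) \<le> lv a"
    and "\<And>t. a \<le> t \<Longrightarrow> t \<le> b \<Longrightarrow> st t \<in> Q" and "finite Q" and "card Q \<le> n"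
  shows "\<exists>cs. length cs = k \<and> disjoint_ordered cs \<and>
    (\<forall>(i, j)\<in>set cs. a \<le> i \<and> i < j \<and> j \<le> b \<and> st i = st j \<and> lv j < lv i)"
  using assms(1-4)
proof (induction k arbitrary: a)
  case 0
  show ?case by (rule exI[of _ "[]"]) (simp add: disjoint_ordered_def)
next
  case (Suc k)
  have "int (Suc k * n) = int n + int k * int n" "0 \<le> int k * int n" by simp_all
  then have "lv b \<le> lv a - int n" "lv a - int n \<le> lv a" using Suc.prems(3) by linarith+
  then obtain m where m: "a \<le> m" "m \<le> b" "lv m = lv a - int n"
    using unit_steps_hit_down[OF Suc.prems(1,2)] by blast
  have "lv m + int n \<le> lv a" "\<And>t. a \<le> t \<Longrightarrow> t \<le> m \<Longrightarrow> st t \<in> Q"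
    using m(2,3) Suc.prems(4) by simp_all
  then obtain i j where ij: "a \<le> i" "i < j" "j \<le> m" "st i = st j" "lv j < lv i"
    using falling_repeated_state[OF unit_steps_on_mono[OF Suc.prems(1) order_refl m(2)] m(1)] assms(5,6)
    by blast
  have "lv b + int (k * n) \<le> lv m" "\<And>t. m \<le> t \<Longrightarrow> t \<le> b \<Longrightarrow> st t \<in> Q"
    using m(1,3) Suc.prems(3,4) by simp_all
  then obtain cs where cs: "length cs = k" "disjoint_ordered cs"
      "\<forall>(i, j)\<in>set cs. m \<le> i \<and> i < j \<and> j \<le> b \<and> st i = st j \<and> lv j < lv i"
    using Suc.IH[OF unit_steps_on_mono[OF Suc.prems(1) m(1) order_refl] m(2)] by blast
  have "disjoint_ordered ((i, j) # cs)"
    using cs(2,3) ij(3) unfolding disjoint_ordered_def by fastforce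
  with cs ij m show ?case by (intro exI[of _ "(i, j) # cs"]) fastforce
qed

lemma window_cycles:
  assumes "\<And>t. a \<le> t \<Longrightarrow> t < a + K * Suc n \<Longrightarrow> st t \<in> Q" and "finite Q" and "card Q \<le> n"
  shows "\<exists>cs. length cs = K \<and> disjoint_ordered cs \<and>
    (\<forall>(i, j)\<in>set cs. a \<le> i \<and> i < j \<and> j \<le> i + n \<and> j < a + K * Suc n \<and> st i = st j)"
  using assms(1)
proof (induction K arbitrary: a)
  case 0
  show ?case by (rule exI[of _ "[]"]) (simp add: disjoint_ordered_def)
next
  case (Suc K)
  have "st ` {a..a + n} \<subseteq> Q" using Suc.prems by auto
  then obtain i j where ij: "a \<le> i" "i < j" "j \<le> a + n" "st i = st j"
    using pigeonhole_interval[of a "a + n" st Q] assms(2,3) by auto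
  obtain cs where cs: "length cs = K" "disjoint_ordered cs"
      "\<forall>(i, j)\<in>set cs. a + Suc n \<le> i \<and> i < j \<and> j \<le> i + n \<and> j < a + Suc n + K * Suc n \<and> st i = st j"
    using Suc.IH[of "a + Suc n"] Suc.prems by fastforce
  have "disjoint_ordered ((i, j) # cs)"
    using cs(2,3) ij(3) unfolding disjoint_ordered_def by fastforce
  with cs ij show ?case by (intro exI[of _ "(i, j) # cs"]) fastforce
qed

section \<open>Cutting cycles out of a walk\<close>

definition is_cycle :: "(nat \<Rightarrow> 'q \<times> nat) \<Rightarrow> nat \<Rightarrow> nat \<Rightarrow> nat \<times> nat \<Rightarrow> bool" where
  "is_cycle f a b c \<longleftrightarrow> a \<le> fst c \<and> fst c < snd c \<and> snd c \<le> b \<and> fst (f (fst c)) = fst (f (snd c))"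

definition cycle_effect :: "(nat \<Rightarrow> 'q \<times> nat) \<Rightarrow> nat \<times> nat \<Rightarrow> int" where
  "cycle_effect f c = int (snd (f (snd c))) - int (snd (f (fst c)))"

definition total_effect :: "(nat \<Rightarrow> 'q \<times> nat) \<Rightarrow> (nat \<times> nat) list \<Rightarrow> int" where
  "total_effect f cs = (\<Sum>c\<leftarrow>cs. cycle_effect f c)"

definition positive_effect :: "(nat \<Rightarrow> 'q \<times> nat) \<Rightarrow> (nat \<times> nat) list \<Rightarrow> int" where
  "positive_effect f cs = (\<Sum>c\<leftarrow>cs. max 0 (cycle_effect f c))"

definition total_length :: "(nat \<times> nat) list \<Rightarrow> nat" where
  "total_length cs = (\<Sum>c\<leftarrow>cs. snd c - fst c)"

lemma positive_effect_nonneg: "0 \<le> positive_effect f cs"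
  unfolding positive_effect_def by (induction cs) auto

lemma positive_effect_append: "positive_effect f (cs @ ds) = positive_effect f cs + positive_effect f ds"
  unfolding positive_effect_def by simp

lemma positive_effect_block_le: "positive_effect f (drop a (take b cs)) \<le> positive_effect f cs"
proof -
  have "positive_effect f cs = positive_effect f (take a (take b cs)) +
      positive_effect f (drop a (take b cs)) + positive_effect f (drop b cs)"
    by (metis append_take_drop_id positive_effect_append)
  then show ?thesis
    using positive_effect_nonneg[of f "take a (take b cs)"] positive_effect_nonneg[of f "drop b cs"]
    by linarith
qed

lemma positive_effect_eq_0: "\<forall>c\<in>set cs. cycle_effect f c \<le> 0 \<Longrightarrow> positive_effect f cs = 0"
  unfolding positive_effect_def by (induction cs) auto

lemma positive_effect_le:
  "\<forall>c\<in>set cs. cycle_effect f c \<le> int n \<Longrightarrow> positive_effect f cs \<le> int (length cs * n)"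
  unfolding positive_effect_def by (induction cs) auto

lemma walk_step_above:
  assumes "\<forall>t. a \<le> t \<longrightarrow> t < b \<longrightarrow> (f t, f (Suc t)) \<in> counter_step \<gamma>"
    and "\<forall>t. a \<le> t \<longrightarrow> t \<le> b \<longrightarrow> B \<le> int (snd (f t))"
    and "a \<le> i" and "i \<le> j" and "j \<le> b"
  shows "(f i, f j) \<in> step_above \<gamma> B ^^ (j - i)"
proof (rule relpow_walk_segment)
  show "\<forall>t. i \<le> t \<longrightarrow> t < j \<longrightarrow> (f t, f (Suc t)) \<in> step_above \<gamma> B"
  proof (intro allI impI)
    fix t assume "i \<le> t" "t < j"
    with assms show "(f t, f (Suc t)) \<in> step_above \<gamma> B" unfolding step_above_def by simp
  qed
qed (rule assms(4))

lemma relpow_step_above_skip_cycle: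
  assumes "(f j, y) \<in> step_above \<gamma> B ^^ n" and "fst (f i) = fst (f j)"
    and "0 \<le> B - cycle_effect f (i, j)" and "B' \<le> B - cycle_effect f (i, j)"
  shows "(f i, shift (- cycle_effect f (i, j)) y) \<in> step_above \<gamma> B' ^^ n"
proof -
  have "shift (- cycle_effect f (i, j)) (f j) = f i"
    using assms(2) unfolding shift_def cycle_effect_def by (simp add: prod_eq_iff)
  then have "(f i, shift (- cycle_effect f (i, j)) y) \<in> step_above \<gamma> (B - cycle_effect f (i, j)) ^^ n"
    using relpow_step_above_shift[OF assms(1), of "- cycle_effect f (i, j)"] assms(3) by simp
  then show ?thesis using relpow_mono[OF step_above_mono[OF assms(4)]] by blast
qed

(* The part of the walk after a removed cycle is shifted by minus its effect; the counter never
   drops by more than the positive part of the removed effects. *)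
lemma remove_cycles:
  assumes walk: "\<forall>t. a \<le> t \<longrightarrow> t < b \<longrightarrow> (f t, f (Suc t)) \<in> counter_step \<gamma>"
    and above: "\<forall>t. a \<le> t \<longrightarrow> t \<le> b \<longrightarrow> B \<le> int (snd (f t))"
    and "disjoint_ordered cs" and "\<forall>c\<in>set cs. is_cycle f a b c"
    and "positive_effect f cs \<le> B" and "a \<le> b"
  shows "\<exists>n. n + total_length cs = b - a \<and>
    B - positive_effect f cs \<le> int (snd (f b)) - total_effect f cs \<and>
    (f a, shift (- total_effect f cs) (f b)) \<in> step_above \<gamma> (B - positive_effect f cs) ^^ n"
  using assms
proof (induction cs arbitrary: a)
  case Nil
  then show ?case
    using walk_step_above[OF Nil.prems(1,2) order_refl Nil.prems(6) order_refl]
    by (auto simp: total_length_def total_effect_def positive_effect_def shift_def)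
next
  case (Cons c cs)
  obtain i j where c: "c = (i, j)" by fastforce
  have ij: "a \<le> i" "i < j" "j \<le> b" "fst (f i) = fst (f j)"
    using Cons.prems(4) unfolding c is_cycle_def by auto
  have cs: "disjoint_ordered cs" "\<forall>c\<in>set cs. is_cycle f j b c"
    using Cons.prems(3,4) unfolding c disjoint_ordered_def is_cycle_def by auto
  define e P E where "e = cycle_effect f c" and "P = positive_effect f cs" and "E = total_effect f cs"
  define B' where "B' = B - (max 0 e + P)"
  have sums: "positive_effect f (c # cs) = max 0 e + P" "total_effect f (c # cs) = e + E"
    "total_length (c # cs) = (j - i) + total_length cs"
    unfolding e_def P_def E_def positive_effect_def total_effect_def total_length_def c by simp_all
  have "0 \<le> P" unfolding P_def by (rule positive_effect_nonneg)
  with sums Cons.prems(5) have floor: "0 \<le> B - P - e" "P \<le> B" "B' \<le> B - P - e" "B' \<le> B"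
    unfolding B'_def by linarith+
  obtain n where n: "n + total_length cs = b - j" "B - P \<le> int (snd (f b)) - E"
      "(f j, shift (- E) (f b)) \<in> step_above \<gamma> (B - P) ^^ n"
    using Cons.IH[of j] Cons.prems(1,2,6) cs ij floor(2) unfolding P_def E_def by auto
  have "shift (- e) (shift (- E) (f b)) = shift (- (e + E)) (f b)"
    using n(2) floor by (simp add: shift_shift algebra_simps)
  moreover have "(f i, shift (- e) (shift (- E) (f b))) \<in> step_above \<gamma> B' ^^ n"
    using relpow_step_above_skip_cycle[OF n(3) ij(4)] floor(1,3) unfolding e_def c by blast
  ultimately have "(f i, shift (- (e + E)) (f b)) \<in> step_above \<gamma> B' ^^ n" by simp
  moreover have "\<forall>t. a \<le> t \<longrightarrow> t \<le> b \<longrightarrow> B' \<le> int (snd (f t))"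
    using Cons.prems(2) floor(4) by force
  then have "(f a, f i) \<in> step_above \<gamma> B' ^^ (i - a)"
    using walk_step_above[OF Cons.prems(1) _ order_refl ij(1)] ij(2,3) by simp
  ultimately have "(f a, shift (- (e + E)) (f b)) \<in> step_above \<gamma> B' ^^ (i - a + n)"
    by (auto intro: relpow_trans)
  moreover have "i - a + n + total_length (c # cs) = b - a" using sums(3) n(1) ij by simp
  moreover have "B' \<le> int (snd (f b)) - (e + E)" using n(2) unfolding B'_def by simp
  ultimately show ?case unfolding sums B'_def by blast
qed

section \<open>Shortest walks to a multiple of the period\<close>

locale shortest_walk =
  fixes \<gamma> :: "('q \<times> int \<times> 'q) set" and Q :: "'q set" and f :: "nat \<Rightarrow> 'q \<times> nat"
    and L :: nat and p :: 'q and g :: nat and n :: nat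
  assumes walk: "\<And>t. t < L \<Longrightarrow> (f t, f (Suc t)) \<in> counter_step \<gamma>"
    and ends_in_p: "fst (f L) = p" and end_level_dvd: "g dvd snd (f L)"
    and shortest: "\<And>L' m. (f 0, (p, m)) \<in> counter_step \<gamma> ^^ L' \<Longrightarrow> g dvd m \<Longrightarrow> L \<le> L'"
    and period_pos: "0 < g" and period_le: "g \<le> n"
    and states_in_Q: "\<And>t. t \<le> L \<Longrightarrow> fst (f t) \<in> Q" and finite_Q: "finite Q"
    and card_Q_le: "card Q \<le> n"
    and unit_steps: "unit_steps_on 0 L (\<lambda>t. int (snd (f t)))"
begin

lemma no_removable_cycles:
  assumes "a \<le> L" and above: "\<forall>t. a \<le> t \<longrightarrow> t \<le> L \<longrightarrow> B \<le> int (snd (f t))"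
    and "disjoint_ordered cs" and "\<forall>c\<in>set cs. is_cycle f a L c" and "length cs = g"
    and "positive_effect f cs \<le> B"
  shows False
proof -
  obtain i k where ik: "i < k" "k \<le> g" "int g dvd sum_list (drop i (take k (map (cycle_effect f) cs)))"
    using exists_block_sum_dvd[of "map (cycle_effect f) cs" g] assms(5) period_pos by auto
  define ds where "ds = drop i (take k cs)"
  have E: "int g dvd total_effect f ds"
    using ik(3) unfolding total_effect_def ds_def by (simp add: drop_map take_map)
  have ds: "disjoint_ordered ds" "\<forall>c\<in>set ds. is_cycle f a L c" "positive_effect f ds \<le> B"
    using assms(3,4,6) positive_effect_block_le[of f i k cs] unfolding ds_def disjoint_ordered_def
    by (auto simp: sorted_wrt_take sorted_wrt_drop dest: in_set_dropD in_set_takeD)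
  have "ds \<noteq> []" using ik assms(5) unfolding ds_def by simp
  then obtain d ds' where "ds = d # ds'" by (meson neq_Nil_conv)
  then have "0 < total_length ds" using ds(2) unfolding total_length_def is_cycle_def by simp
  have "\<forall>t. a \<le> t \<longrightarrow> t < L \<longrightarrow> (f t, f (Suc t)) \<in> counter_step \<gamma>" using walk by simp
  from remove_cycles[OF this above ds \<open>a \<le> L\<close>] obtain m where m: "m + total_length ds = L - a"
    "B - positive_effect f ds \<le> int (snd (f L)) - total_effect f ds"
    "(f a, shift (- total_effect f ds) (f L)) \<in> step_above \<gamma> (B - positive_effect f ds) ^^ m"
    by blast
  define h where "h = int (snd (f L)) - total_effect f ds"
  have "0 \<le> h" using m(2) ds(3) unfolding h_def by linarith
  moreover have "int g dvd h" using E end_level_dvd unfolding h_def by simp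
  ultimately have "g dvd nat h" by (metis int_dvd_int_iff nat_0_le)
  have "(f 0, f a) \<in> counter_step \<gamma> ^^ a"
    using relpow_walk_segment[of 0 a f] walk \<open>a \<le> L\<close> by simp
  moreover have "(f a, (p, nat h)) \<in> counter_step \<gamma> ^^ m"
    using m(3) relpow_mono[OF step_above_subset] ends_in_p unfolding h_def shift_def by auto
  ultimately have "(f 0, (p, nat h)) \<in> counter_step \<gamma> ^^ (a + m)" by (rule relpow_trans)
  then have "L \<le> a + m" using \<open>g dvd nat h\<close> by (rule shortest)
  with m(1) \<open>0 < total_length ds\<close> \<open>a \<le> L\<close> show False by linarith
qed

lemma inj_on_walk: "inj_on f {0..L}"
proof -
  have False if "i < j" "j \<le> L" "f i = f j" for i j
  proof -
    have "(f 0, f i) \<in> counter_step \<gamma> ^^ i" "(f j, f L) \<in> counter_step \<gamma> ^^ (L - j)"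
      using relpow_walk_segment[of 0 i f] relpow_walk_segment[of j L f] walk that by auto
    then have "(f 0, (p, snd (f L))) \<in> counter_step \<gamma> ^^ (i + (L - j))"
      using relpow_trans ends_in_p that(3) by (metis prod.collapse)
    then have "L \<le> i + (L - j)" using shortest end_level_dvd by blast
    with that show False by linarith
  qed
  then show ?thesis unfolding inj_on_def by (metis atLeastAtMost_iff linorder_neqE_nat)
qed

lemma card_prefix_le:
  assumes "\<tau> \<le> L" and "\<And>t. t \<le> \<tau> \<Longrightarrow> snd (f t) < M"
  shows "\<tau> + 1 \<le> n * M"
proof -
  have "card (f ` {0..\<tau>}) = \<tau> + 1"
    using inj_on_subset[OF inj_on_walk] assms(1) by (simp add: card_image)
  moreover have "f ` {0..\<tau>} \<subseteq> Q \<times> {..<M}"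
  proof
    fix x assume "x \<in> f ` {0..\<tau>}"
    then obtain t where "t \<le> \<tau>" "x = f t" by auto
    then show "x \<in> Q \<times> {..<M}"
      using states_in_Q[of t] assms(1) assms(2)[of t] by (simp add: mem_Times_iff)
  qed
  then have "card (f ` {0..\<tau>}) \<le> card Q * M"
    using card_mono[of "Q \<times> {..<M}"] finite_Q by (simp add: card_cartesian_product)
  moreover have "card Q * M \<le> n * M" using card_Q_le by simp
  ultimately show ?thesis by linarith
qed

lemma levels_bounded_before_low:
  assumes "\<tau> \<le> L" and "snd (f \<tau>) < n * n" and "t \<le> \<tau>"
  shows "snd (f t) < n * n + g * n"
proof (rule ccontr)
  assume "\<not> snd (f t) < n * n + g * n"
  then have "int (snd (f \<tau>)) + int (g * n) \<le> int (snd (f t))" using assms(2) by linarith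
  then obtain cs where cs: "length cs = g" "disjoint_ordered cs"
      "\<forall>(i, j)\<in>set cs. t \<le> i \<and> i < j \<and> j \<le> \<tau> \<and> fst (f i) = fst (f j) \<and> snd (f j) < snd (f i)"
    using falling_cycles[of t \<tau> "\<lambda>t. int (snd (f t))" g n "\<lambda>t. fst (f t)" Q]
      unit_steps_on_mono[OF unit_steps] states_in_Q finite_Q card_Q_le assms
    by fastforce
  have "\<forall>c\<in>set cs. is_cycle f 0 L c" "positive_effect f cs = 0"
    using cs(3) assms(1) positive_effect_eq_0[of cs f]
    unfolding is_cycle_def cycle_effect_def by fastforce+
  then show False using no_removable_cycles[of 0 0 cs] cs(1,2) by simp
qed

lemma high_suffix_short:
  assumes "\<forall>t. a \<le> t \<longrightarrow> t \<le> L \<longrightarrow> n * n \<le> snd (f t)"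
  shows "L < a + g * Suc n"
proof (rule ccontr)
  assume "\<not> L < a + g * Suc n"
  then have "\<And>t. a \<le> t \<Longrightarrow> t < a + g * Suc n \<Longrightarrow> fst (f t) \<in> Q" using states_in_Q by simp
  then obtain cs where cs: "length cs = g" "disjoint_ordered cs"
      "\<forall>(i, j)\<in>set cs. a \<le> i \<and> i < j \<and> j \<le> i + n \<and> j < a + g * Suc n \<and> fst (f i) = fst (f j)"
    using window_cycles[of a g n "\<lambda>t. fst (f t)" Q] finite_Q card_Q_le by blast
  have "a \<le> L" using \<open>\<not> L < a + g * Suc n\<close> by simp
  have cycles: "\<forall>c\<in>set cs. is_cycle f a L c"
    using cs(3) \<open>\<not> L < a + g * Suc n\<close> unfolding is_cycle_def by fastforce
  have "\<forall>c\<in>set cs. cycle_effect f c \<le> int n"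
  proof
    fix c assume "c \<in> set cs"
    then have "fst c < snd c" "snd c \<le> L" "snd c - fst c \<le> n"
      using cs(3) cycles unfolding is_cycle_def by auto
    moreover have "unit_steps_on (fst c) (snd c) (\<lambda>t. int (snd (f t)))"
      using unit_steps_on_mono[OF unit_steps] \<open>snd c \<le> L\<close> by simp
    ultimately show "cycle_effect f c \<le> int n"
      using unit_steps_on_dist[of "fst c" "snd c"] unfolding cycle_effect_def by fastforce
  qed
  then have "positive_effect f cs \<le> int (g * n)" using positive_effect_le[of cs f n] cs(1) by simp
  also have "\<dots> \<le> int (n * n)" unfolding of_nat_le_iff using period_le by (rule mult_le_mono1)
  finally have "positive_effect f cs \<le> int (n * n)" .
  moreover have "\<forall>t. a \<le> t \<longrightarrow> t \<le> L \<longrightarrow> int (n * n) \<le> int (snd (f t))"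
    using assms by (simp only: of_nat_le_iff)
  ultimately show False using no_removable_cycles[OF \<open>a \<le> L\<close> _ cs(2) cycles cs(1)] by blast
qed

lemma exists_high_suffix: "\<exists>a \<le> 2 * n ^ 3. \<forall>t. a \<le> t \<longrightarrow> t \<le> L \<longrightarrow> n * n \<le> snd (f t)"
proof (cases "\<exists>t \<le> L. snd (f t) < n * n")
  case True
  then obtain \<tau> where \<tau>: "\<tau> \<le> L" "snd (f \<tau>) < n * n"
      and last: "\<And>t. t \<le> L \<Longrightarrow> snd (f t) < n * n \<Longrightarrow> t \<le> \<tau>"
    using Nat.ex_has_greatest_nat[of "\<lambda>t. t \<le> L \<and> snd (f t) < n * n" _ L] by blast
  have "\<tau> + 1 \<le> n * (n * n + g * n)"
    using card_prefix_le[OF \<tau>(1)] levels_bounded_before_low[OF \<tau>] by blast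
  also have "\<dots> \<le> 2 * n ^ 3"
    using period_le by (simp add: power3_eq_cube algebra_simps mult_le_mono)
  finally show ?thesis using last by (intro exI[of _ "\<tau> + 1"]) force
qed force

lemma length_bound: "L \<le> 4 * n ^ 3"
proof -
  obtain a where "a \<le> 2 * n ^ 3" "L < a + g * Suc n" using exists_high_suffix high_suffix_short by blast
  moreover have "g * Suc n \<le> n * Suc n" using period_le by (rule mult_le_mono1)
  moreover have "n * Suc n \<le> 2 * n ^ 3"
  proof -
    have "1 \<le> n" using period_pos period_le by simp
    then have "n \<le> n * n" "n * n \<le> n ^ 3" by (simp_all add: power3_eq_cube)
    moreover have "n * Suc n = n * n + n" by simp
    ultimately show ?thesis by linarith
  qed
  ultimately show ?thesis by linarith
qed

end

lemma shortest_walk_length_bound: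
  assumes pv: "pvass Q \<gamma> W" and "fst c \<in> Q" and "0 < g" and "g \<le> card Q" and "g dvd m"
    and path: "(c, (p, m)) \<in> counter_step \<gamma> ^^ L"
    and shortest: "\<And>L' m'. (c, (p, m')) \<in> counter_step \<gamma> ^^ L' \<Longrightarrow> g dvd m' \<Longrightarrow> L \<le> L'"
  shows "L \<le> 4 * card Q ^ 3"
proof -
  obtain f where f: "f 0 = c" "f L = (p, m)" "\<forall>t<L. (f t, f (Suc t)) \<in> counter_step \<gamma>"
    using path unfolding relpow_fun_conv by blast
  interpret shortest_walk \<gamma> Q f L p g "card Q"
  proof
    show "fst (f t) \<in> Q" if "t \<le> L" for t
      using walk_in_Q[OF pv f(3)] f(1) assms(2) that by simp
    show "unit_steps_on 0 L (\<lambda>t. int (snd (f t)))" by (rule walk_unit_steps[OF pv f(3)])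
    show "finite Q" using pv unfolding pvass_def by simp
  qed (use f assms(3-5) shortest in auto)
  show ?thesis by (rule length_bound)
qed

section \<open>Type II regions\<close>

lemma type2_period:
  assumes pv: "pvass Q \<gamma> W" and "p \<in> Q"
    and infinite: "infinite (post_star Q \<gamma> {(p, 0)})"
    and returns: "post_star Q \<gamma> {(p, 0)} \<subseteq> pre_star Q \<gamma> {(p, 0)}"
  shows "\<exists>g. 0 < g \<and> g \<le> card Q \<and> (\<forall>k. ((p, 0), (p, k * g)) \<in> (counter_step \<gamma>)\<^sup>*)"
proof -
  have "finite Q" using pv unfolding pvass_def by simp
  have "\<exists>x\<in>post_star Q \<gamma> {(p, 0)}. card Q \<le> snd x"
  proof (rule ccontr)
    assume "\<not> (\<exists>x\<in>post_star Q \<gamma> {(p, 0)}. card Q \<le> snd x)"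
    then have "post_star Q \<gamma> {(p, 0)} \<subseteq> Q \<times> {..<card Q}"
      unfolding post_star_def by (auto simp: not_le)
    with \<open>finite Q\<close> infinite show False by (meson finite_SigmaI finite_lessThan finite_subset)
  qed
  then obtain s m where sm: "(s, m) \<in> post_star Q \<gamma> {(p, 0)}" "card Q \<le> m" by auto
  have "((p, 0), (s, m)) \<in> (counter_step \<gamma>)\<^sup>*" and down: "((s, m), (p, 0)) \<in> (counter_step \<gamma>)\<^sup>*"
    using sm(1) returns rtrancl_trans_rel_eq[OF pv] unfolding post_star_def pre_star_def by auto
  then obtain L f where f: "f 0 = (p, 0)" "f L = (s, m)" "\<forall>t<L. (f t, f (Suc t)) \<in> counter_step \<gamma>"
    unfolding rtrancl_power relpow_fun_conv by blast
  obtain i j where ij: "i < j" "j \<le> L" "fst (f i) = fst (f j)"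
      "0 < int (snd (f j)) - int (snd (f i))" "int (snd (f j)) - int (snd (f i)) \<le> int (card Q)"
    using rising_repeated_state[of 0 L "\<lambda>t. int (snd (f t))" "card Q" "\<lambda>t. fst (f t)" Q]
      walk_unit_steps[OF pv f(3)] walk_in_Q[OF pv f(3)] f(1,2) \<open>p \<in> Q\<close> \<open>finite Q\<close> sm(2)
    by auto
  define u h g where "u = fst (f i)" and "h = snd (f i)" and "g = snd (f j) - snd (f i)"
  have fi: "f i = (u, h)" and fj: "f j = (u, h + g)"
    using ij(3,4) unfolding u_def h_def g_def by (simp_all add: prod_eq_iff)
  have segment: "(f i', f j') \<in> (counter_step \<gamma>)\<^sup>*" if "i' \<le> j'" "j' \<le> L" for i' j'
  proof -
    have "\<forall>t. i' \<le> t \<longrightarrow> t < j' \<longrightarrow> (f t, f (Suc t)) \<in> counter_step \<gamma>" using f(3) that(2) by simp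
    from relpow_walk_segment[OF this that(1)] show ?thesis by (rule relpow_imp_rtrancl)
  qed
  have to_cycle: "((p, 0), (u, h)) \<in> (counter_step \<gamma>)\<^sup>*" using segment[of 0 i] ij f(1) fi by simp
  have cycle: "((u, h), (u, h + g)) \<in> (counter_step \<gamma>)\<^sup>*" using segment[of i j] ij fi fj by simp
  have from_cycle: "((u, h + g), (p, 0)) \<in> (counter_step \<gamma>)\<^sup>*"
    using segment[of j L] ij(2) f(2) fj down by (metis order_refl rtrancl_trans)
  have "((p, 0), (p, k * g)) \<in> (counter_step \<gamma>)\<^sup>*" for k
  proof -
    have "((u, h), (u, h + Suc k * g)) \<in> (counter_step \<gamma>)\<^sup>*"
      by (rule rtrancl_counter_step_pump[OF cycle])
    moreover have "((u, h + Suc k * g), (p, k * g)) \<in> (counter_step \<gamma>)\<^sup>*"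
      using rtrancl_counter_step_lift[OF from_cycle, of "k * g"] by (simp add: algebra_simps)
    ultimately show ?thesis using to_cycle by (meson rtrancl_trans)
  qed
  moreover have "0 < g" "g \<le> card Q" using ij(4,5) unfolding g_def by auto
  ultimately show ?thesis by blast
qed

theorem mainTheorem6:
  fixes Q :: "'q set" and \<gamma> :: "('q \<times> int \<times> 'q) set" and W :: "'q \<times> int \<times> 'q \<Rightarrow> nat"
    and R :: "('q \<times> nat) set"
  assumes "pvass Q \<gamma> W"
    and "is_bscc Q \<gamma> C" and "p \<in> C"
    and "R = type2_region Q \<gamma> p"
    and "R \<noteq> {}"
    and "c \<in> pre_star Q \<gamma> R"
  shows "\<exists>n \<le> 4 * card Q ^ 3. \<exists>c'\<in>R. (c, c') \<in> trans_rel \<gamma> ^^ n"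
proof -
  note reach = rtrancl_trans_rel_eq[OF assms(1)]
  have "p \<in> Q" using assms(2,3) unfolding is_bscc_def by auto
  have R: "R = post_star Q \<gamma> {(p, 0)}" "infinite R" "R \<subseteq> pre_star Q \<gamma> {(p, 0)}"
    using assms(4,5) unfolding type2_region_def by (auto split: if_splits)
  obtain g where g: "0 < g" "g \<le> card Q" "\<And>k. ((p, 0), (p, k * g)) \<in> (counter_step \<gamma>)\<^sup>*"
    using type2_period[OF assms(1) \<open>p \<in> Q\<close>] R by auto
  obtain x where "x \<in> R" "(c, x) \<in> (counter_step \<gamma>)\<^sup>*" "fst c \<in> Q"
    using assms(6) reach unfolding pre_star_def by auto
  with R(3) reach have "(c, (p, 0)) \<in> (counter_step \<gamma>)\<^sup>*"
    unfolding pre_star_def by (auto intro: rtrancl_trans)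
  then obtain L m where L: "g dvd m" "(c, (p, m)) \<in> counter_step \<gamma> ^^ L"
      "\<And>L' m'. (c, (p, m')) \<in> counter_step \<gamma> ^^ L' \<Longrightarrow> g dvd m' \<Longrightarrow> L \<le> L'"
    using relpow_shortest[of c "(p, 0)" _ "\<lambda>y. fst y = p \<and> g dvd snd y"] by fastforce
  have "L \<le> 4 * card Q ^ 3" using shortest_walk_length_bound[OF assms(1) \<open>fst c \<in> Q\<close> g(1,2) L] .
  moreover have "(p, m) \<in> R"
    using g(3)[of "m div g"] L(1) \<open>p \<in> Q\<close> R(1) reach unfolding post_star_def by auto
  ultimately show ?thesis using relpow_counter_step_imp_trans_rel[OF L(2)] by blast
qed

end
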